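(* For $1\le\sigma\le2$ and $t\ge 500$, $$|\zeta(\sigma+it)|<\log t-0.14.$$
   Context: $\zeta$ denotes the Riemann zeta function. *)

theory Defs
  imports "HOL-Analysis.Analysis"
begin

text \<open>For Re s > 1 it is the Dirichlet series; for
  0 < Re s \<le> 1, s \<noteq> 1, we use the standard analytic continuation
  zeta s = s/(s-1) - s * integral over [1,\<infinity>) of frac x * x^(-s-1).
  (The integral converges absolutely for Re s > 0.) Other values are irrelevant here.\<close>

definition riemann_zeta :: "complex \<Rightarrow> complex" where
  "riemann_zeta s =
     (if Re s > 1 then (\<Sum>n. 1 / (of_nat (Suc n)) powr s)
      else s / (s - 1) - s * integral {1..} (\<lambda>x::real. of_real (frac x) * (of_real x) powr (- s - 1)))"

end

(*
  Euler-Maclaurin summation to first order. With the trapezoid error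
  E_n(s) = int_n^(n+1) x^(-s) dx - (n^(-s) + (n+1)^(-s))/2, one has for Re s >= 1, s /= 1, N >= 1

    zeta(s) = sum_(n<=N) n^(-s) - N^(-s)/2 + N^(1-s)/(s-1) - sum_(n>=N) E_n(s),

  because both the Dirichlet series (Re s > 1) and the continuation
  s/(s-1) - s int_1^oo frac(x) x^(-s-1) dx (on Re s = 1) equal s/(s-1) - 1/2 - sum_(n>=1) E_n(s).
  The Peano kernel of the trapezoid rule gives |E_n(s)| <= |s||s+1|/(12 n^3), and
  1/n^3 <= (1/(n-1/2)^2 - 1/(n+1/2)^2)/2 telescopes the tail to |s||s+1|/(24 (N-1/2)^2).
  The first sum is at most harm N - 1/(2N) <= gamma + log N. For s = sigma + it and
  N = floor(2t/7) the tail is at most 0.522, so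
  |zeta(s)| <= gamma + log t - log(7/2) + 1/t + 0.522 < log t - 0.14.
*)
theory Submission
  imports Defs
begin

lemma powr_add_one_complex:
  fixes z a :: complex
  assumes "z \<noteq> 0"
  shows "z powr (a + 1) = z * z powr a"
  using assms by (simp add: powr_add powr_nat'[of z 1, simplified])

text \<open>Peano kernel form of the trapezoid rule: the function differentiated below increases over
  \<open>[n, n + 1]\<close> by exactly the trapezoid error for \<open>x\<^sup>-\<^sup>s\<close>, and its derivative is
  \<open>-K(x) s (s + 1) x\<^sup>-\<^sup>s\<^sup>-\<^sup>2\<close> with kernel \<open>K(x) = (x - n)(n + 1 - x)/2 \<ge> 0\<close> of integral \<open>1/12\<close>.\<close>

lemma trapezoid_kernel_has_field_derivative:
  fixes s z :: complex and n :: real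
  assumes "z \<notin> \<real>\<^sub>\<le>\<^sub>0" "s \<noteq> 1"
  shows "((\<lambda>z. z powr (1 - s) / (1 - s) + (z - n) * (n + 1 - z) / 2 * s * z powr (- s - 1)
              + (n + 1/2 - z) * z powr (- s))
          has_field_derivative - ((z - n) * (n + 1 - z) / 2) * s * (s + 1) * z powr (- s - 2)) (at z)"
proof -
  have "z \<noteq> 0" "1 - s \<noteq> 0" using assms by auto
  moreover have "z powr (- 2 - s) = z powr (- s - 2)"
    by (rule arg_cong[where f = "\<lambda>a. z powr a"]) simp
  ultimately show ?thesis
    using assms by (auto intro!: derivative_eq_intros) (simp add: field_simps)
qed

lemma norm_trapezoid_kernel_le:
  fixes s :: complex and n x :: real
  assumes "1 \<le> n" "n \<le> x" "x \<le> n + 1" "1 \<le> Re s"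
  shows "norm (of_real ((x - n) * (n + 1 - x) / 2) * s * (s + 1) * of_real x powr (- s - 2))
           \<le> norm s * norm (s + 1) / n ^ 3 * ((x - n) * (n + 1 - x) / 2)"
proof -
  define K where "K = (x - n) * (n + 1 - x) / 2"
  have "K \<ge> 0" using assms by (simp add: K_def)
  have "x powr (- Re s - 2) \<le> x powr (-3)"
    using assms by (intro powr_mono) auto
  also have "\<dots> \<le> n powr (-3)"
    using assms by (intro powr_mono2') auto
  also have "\<dots> = 1 / n ^ 3"
    using assms by (simp add: powr_minus_divide powr_realpow)
  finally have "x powr (- Re s - 2) \<le> 1 / n ^ 3" .
  have "norm (of_real K * s * (s + 1) * of_real x powr (- s - 2))
          = K * (norm s * norm (s + 1) * x powr (- Re s - 2))"
    using assms \<open>K \<ge> 0\<close> by (simp add: norm_mult norm_powr_real_powr)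
  also have "\<dots> \<le> K * (norm s * norm (s + 1) * (1 / n ^ 3))"
    using \<open>x powr (- Re s - 2) \<le> 1 / n ^ 3\<close> \<open>K \<ge> 0\<close> by (intro mult_left_mono) auto
  also have "\<dots> = norm s * norm (s + 1) / n ^ 3 * K"
    by simp
  finally show ?thesis
    unfolding K_def .
qed

lemma trapezoid_error_powr_bound:
  fixes s :: complex and n :: real
  assumes "1 \<le> n" "1 \<le> Re s" "s \<noteq> 1"
  shows "norm ((of_real (n + 1) powr (1 - s) - of_real n powr (1 - s)) / (1 - s)
            - (of_real (n + 1) powr (- s) + of_real n powr (- s)) / 2)
         \<le> norm s * norm (s + 1) / (12 * n ^ 3)"
proof -
  define G where "G z = z powr (1 - s) / (1 - s) + (z - n) * (n + 1 - z) / 2 * s * z powr (- s - 1)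
    + (n + 1/2 - z) * z powr (- s)" for z :: complex
  define G' where "G' z = - ((z - n) * (n + 1 - z) / 2) * s * (s + 1) * z powr (- s - 2)" for z :: complex
  define F where "F x = G (of_real x)" for x :: real
  define F' where "F' x = G' (of_real x)" for x :: real
  define B where "B = norm s * norm (s + 1) / n ^ 3"
  define \<phi> where "\<phi> x = B * ((x - n)\<^sup>2 / 4 - (x - n) ^ 3 / 6)" for x :: real
  have F_deriv: "(F has_vector_derivative F' x) (at x within S)" if "x > 0" for x S
  proof -
    have "complex_of_real x \<notin> \<real>\<^sub>\<le>\<^sub>0"
      using that by (auto simp: complex_nonpos_Reals_iff)
    from trapezoid_kernel_has_field_derivative[OF this \<open>s \<noteq> 1\<close>, of n] show ?thesis
      unfolding F_def F'_def G_def G'_def by (rule has_vector_derivative_real_field)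
  qed
  have "norm (F (n + 1) - F n) \<le> \<phi> (n + 1) - \<phi> n"
  proof (rule differentiable_bound_general[where f' = F' and \<phi>' = "\<lambda>x. B * ((x - n) * (n + 1 - x) / 2)"])
    show "continuous_on {n..n + 1} F"
      using assms by (intro continuous_at_imp_continuous_on ballI
          has_vector_derivative_continuous[OF F_deriv]) auto
    show "continuous_on {n..n + 1} \<phi>"
      unfolding \<phi>_def by (intro continuous_intros) auto
    show "(F has_vector_derivative F' x) (at x)" if "n < x" "x < n + 1" for x
      using that assms by (intro F_deriv) auto
    show "(\<phi> has_vector_derivative B * ((x - n) * (n + 1 - x) / 2)) (at x)" for x
      unfolding \<phi>_def has_real_derivative_iff_has_vector_derivative[symmetric]
      by (auto intro!: derivative_eq_intros simp: field_simps power2_eq_square power3_eq_cube)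
    show "norm (F' x) \<le> B * ((x - n) * (n + 1 - x) / 2)" if "n < x" "x < n + 1" for x
    proof -
      have "F' x = - (of_real ((x - n) * (n + 1 - x) / 2) * s * (s + 1) * of_real x powr (- s - 2))"
        by (simp add: F'_def G'_def)
      then show ?thesis
        using norm_trapezoid_kernel_le[of n x s] that assms by (simp add: B_def)
    qed
  qed simp
  moreover have "\<phi> (n + 1) - \<phi> n = B / 12"
    by (simp add: \<phi>_def)
  moreover have "F (n + 1) - F n = (of_real (n + 1) powr (1 - s) - of_real n powr (1 - s)) / (1 - s)
      - (of_real (n + 1) powr (- s) + of_real n powr (- s)) / 2"
    by (simp add: F_def G_def diff_divide_distrib algebra_simps)
  ultimately show ?thesis
    by (simp add: B_def)
qed

definition trapezoid_error :: "complex \<Rightarrow> nat \<Rightarrow> complex" where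
  "trapezoid_error s n =
     (of_nat (Suc n) powr (1 - s) - of_nat n powr (1 - s)) / (1 - s)
     - (of_nat (Suc n) powr (- s) + of_nat n powr (- s)) / 2"

lemma norm_trapezoid_error_le:
  assumes "1 \<le> n" "1 \<le> Re s" "s \<noteq> 1"
  shows "norm (trapezoid_error s n) \<le> norm s * norm (s + 1) / (12 * real n ^ 3)"
  using trapezoid_error_powr_bound[of "real n" s] assms by (simp add: trapezoid_error_def add_ac)

lemma inverse_cube_le_telescoping:
  fixes x :: real
  assumes "1 \<le> x"
  shows "1 / x ^ 3 \<le> (1 / (x - 1/2)\<^sup>2 - 1 / (x + 1/2)\<^sup>2) / 2"
proof -
  have "x\<^sup>2 - 1/4 > 0"
    using one_le_power[OF assms, of 2] by simp
  have "1 / a\<^sup>2 - 1 / b\<^sup>2 = (b\<^sup>2 - a\<^sup>2) / (a * b)\<^sup>2" if "a \<noteq> 0" "b \<noteq> 0" for a b :: real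
    using that by (simp add: field_simps)
  then have "1 / (x - 1/2)\<^sup>2 - 1 / (x + 1/2)\<^sup>2 = ((x + 1/2)\<^sup>2 - (x - 1/2)\<^sup>2) / ((x - 1/2) * (x + 1/2))\<^sup>2"
    using assms by simp
  also have "\<dots> = 2 * x / (x\<^sup>2 - 1/4)\<^sup>2"
    by (simp add: power2_eq_square algebra_simps)
  finally have "(1 / (x - 1/2)\<^sup>2 - 1 / (x + 1/2)\<^sup>2) / 2 = x / (x\<^sup>2 - 1/4)\<^sup>2"
    by simp
  moreover have "x / (x\<^sup>2)\<^sup>2 \<le> x / (x\<^sup>2 - 1/4)\<^sup>2"
    using \<open>x\<^sup>2 - 1/4 > 0\<close> assms by (intro divide_left_mono power_mono mult_pos_pos) auto
  moreover have "x / (x\<^sup>2)\<^sup>2 = 1 / x ^ 3"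
    using assms by (simp add: field_simps power2_eq_square power3_eq_cube)
  ultimately show ?thesis
    by simp
qed

lemma
  assumes "1 \<le> Re s" "s \<noteq> 1" "1 \<le> m"
  shows summable_trapezoid_error: "summable (\<lambda>k. trapezoid_error s (k + m))"
    and norm_suminf_trapezoid_error_le:
      "norm (\<Sum>k. trapezoid_error s (k + m)) \<le> norm s * norm (s + 1) / (24 * (real m - 1/2)\<^sup>2)"
proof -
  define C where "C = norm s * norm (s + 1)"
  define D where "D k = 1 / (real k + real m - 1/2)\<^sup>2" for k
  have "D \<longlonglongrightarrow> 0"
    unfolding D_def by real_asymp
  then have "(\<lambda>k. D k - D (Suc k)) sums D 0"
    using telescope_sums' by fastforce
  then have telescope: "(\<lambda>k. C / 24 * (D k - D (Suc k))) sums (C / 24 * D 0)"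
    by (rule sums_mult)
  have bound: "norm (trapezoid_error s (k + m)) \<le> C / 24 * (D k - D (Suc k))" for k
  proof -
    have "norm (trapezoid_error s (k + m)) \<le> C / 12 * (1 / real (k + m) ^ 3)"
      using norm_trapezoid_error_le[of "k + m" s] assms by (simp add: C_def)
    also have "\<dots> \<le> C / 12 * ((1 / (real (k + m) - 1/2)\<^sup>2 - 1 / (real (k + m) + 1/2)\<^sup>2) / 2)"
      using assms by (intro mult_left_mono inverse_cube_le_telescoping) (auto simp: C_def)
    also have "\<dots> = C / 24 * (D k - D (Suc k))"
    proof -
      have "real (k + m) - 1/2 = real k + real m - 1/2" "real (k + m) + 1/2 = real (Suc k) + real m - 1/2"
        by simp_all
      then show ?thesis
        by (simp only: D_def) simp
    qed
    finally show ?thesis .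
  qed
  have "summable (\<lambda>k. norm (trapezoid_error s (k + m)))"
    using bound by (intro summable_comparison_test[OF _ sums_summable[OF telescope]]) auto
  then show "summable (\<lambda>k. trapezoid_error s (k + m))"
    by (rule summable_norm_cancel)
  have "norm (\<Sum>k. trapezoid_error s (k + m)) \<le> (\<Sum>k. norm (trapezoid_error s (k + m)))"
    by (rule summable_norm) fact
  also have "\<dots> \<le> (\<Sum>k. C / 24 * (D k - D (Suc k)))"
    using bound \<open>summable (\<lambda>k. norm _)\<close> sums_summable[OF telescope] by (rule suminf_le)
  also have "\<dots> = C / 24 * D 0"
    using telescope by (simp add: sums_iff)
  finally show "norm (\<Sum>k. trapezoid_error s (k + m)) \<le> norm s * norm (s + 1) / (24 * (real m - 1/2)\<^sup>2)"
    by (simp add: C_def D_def)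
qed

lemma sum_trapezoid_error:
  assumes "a \<le> b"
  shows "(\<Sum>n=a..<b. trapezoid_error s n) =
           (of_nat b powr (1 - s) - of_nat a powr (1 - s)) / (1 - s)
           - (\<Sum>n=a..b. of_nat n powr (- s)) + (of_nat a powr (- s) + of_nat b powr (- s)) / 2"
  using assms
proof (induction b rule: dec_induct)
  case base
  show ?case by simp
next
  case (step b)
  then show ?case
    by (simp add: trapezoid_error_def diff_divide_distrib add_divide_distrib algebra_simps)
qed

lemma shifted_powr_has_field_derivative:
  fixes s z c :: complex
  assumes "z \<notin> \<real>\<^sub>\<le>\<^sub>0" "s \<noteq> 0" "s \<noteq> 1"
  shows "((\<lambda>z. z powr (1 - s) / (1 - s) + c * z powr (- s) / s)
           has_field_derivative (z - c) * z powr (- s - 1)) (at z)"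
proof -
  have "z \<noteq> 0"
    using assms by auto
  have "- s = (- s - 1) + 1"
    by simp
  then have "z powr (- s) = z * z powr (- s - 1)"
    using \<open>z \<noteq> 0\<close> by (metis powr_add_one_complex)
  with assms show ?thesis
    by (auto intro!: derivative_eq_intros) (simp add: algebra_simps)
qed

lemma shifted_powr_has_integral_unit_interval:
  fixes s :: complex and n :: nat
  assumes "1 \<le> n" "s \<noteq> 0" "s \<noteq> 1"
  shows "((\<lambda>x. (of_real x - of_nat n) * of_real x powr (- s - 1)) has_integral
           (trapezoid_error s n + (of_nat n powr (- s) - of_nat (Suc n) powr (- s)) / 2) / s)
         {real n..real n + 1}"
proof -
  define H where "H z = z powr (1 - s) / (1 - s) + of_nat n * z powr (- s) / s" for z :: complex
  have "((\<lambda>x. (of_real x - of_nat n) * of_real x powr (- s - 1)) has_integral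
          H (of_real (real n + 1)) - H (of_real (real n))) {real n..real n + 1}"
  proof (rule fundamental_theorem_of_calculus)
    fix x assume "x \<in> {real n..real n + 1}"
    then have "complex_of_real x \<notin> \<real>\<^sub>\<le>\<^sub>0"
      using assms by (auto simp: complex_nonpos_Reals_iff)
    from shifted_powr_has_field_derivative[OF this assms(2,3), of "of_nat n"]
    show "((\<lambda>x. H (of_real x)) has_vector_derivative (of_real x - of_nat n) * of_real x powr (- s - 1))
            (at x within {real n..real n + 1})"
      unfolding H_def by (rule has_vector_derivative_real_field)
  qed simp
  moreover have "H (of_real (real n + 1)) - H (of_real (real n))
      = (trapezoid_error s n + (of_nat n powr (- s) - of_nat (Suc n) powr (- s)) / 2) / s"
  proof -
    define a b where "a = (of_nat n :: complex)" and "b = (of_nat (Suc n) :: complex)"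
    have "a \<noteq> 0" "b = a + 1" "1 - s \<noteq> 0"
      using assms by (auto simp: a_def b_def)
    have "b \<noteq> 0"
      unfolding b_def by (rule of_nat_neq_0)
    have "1 - s = - s + 1"
      by simp
    then have pow: "a powr (1 - s) = a * a powr (- s)" "b powr (1 - s) = b * b powr (- s)"
      using \<open>a \<noteq> 0\<close> \<open>b \<noteq> 0\<close> by (metis powr_add_one_complex)+
    have "H (of_real (real n + 1)) - H (of_real (real n))
        = (b powr (1 - s) - a powr (1 - s)) / (1 - s) + a * (b powr (- s) - a powr (- s)) / s"
      by (simp add: H_def a_def b_def diff_divide_distrib algebra_simps)
    also have "\<dots> = ((b powr (1 - s) - a powr (1 - s)) / (1 - s) - b powr (- s)) / s"
      unfolding pow using assms \<open>b = a + 1\<close> \<open>1 - s \<noteq> 0\<close> by (simp add: field_simps)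
    also have "\<dots> = (trapezoid_error s n + (a powr (- s) - b powr (- s)) / 2) / s"
      by (simp add: trapezoid_error_def a_def b_def diff_divide_distrib add_divide_distrib algebra_simps)
    finally show ?thesis
      by (simp add: a_def b_def)
  qed
  ultimately show ?thesis
    by simp
qed

lemma frac_powr_has_integral_unit_interval:
  fixes s :: complex and n :: nat
  assumes "1 \<le> n" "s \<noteq> 0" "s \<noteq> 1"
  shows "((\<lambda>x. of_real (frac x) * of_real x powr (- s - 1)) has_integral
           (trapezoid_error s n + (of_nat n powr (- s) - of_nat (Suc n) powr (- s)) / 2) / s)
         {real n..real n + 1}"
proof (rule has_integral_spike_finite[OF _ _ shifted_powr_has_integral_unit_interval[OF assms]])
  fix x assume "x \<in> {real n..real n + 1} - {real n + 1}"
  then have "\<lfloor>x\<rfloor> = int n"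
    by (simp add: floor_eq_iff)
  then show "of_real (frac x) * of_real x powr (- s - 1) = (of_real x - of_nat n) * of_real x powr (- s - 1)"
    by (simp add: frac_def)
qed simp

lemma frac_powr_has_integral_initial:
  fixes s :: complex
  assumes "s \<noteq> 0" "s \<noteq> 1"
  shows "((\<lambda>x. of_real (frac x) * of_real x powr (- s - 1)) has_integral
           ((\<Sum>k<M. trapezoid_error s (k + 1)) + (1 - of_nat (Suc M) powr (- s)) / 2) / s)
         {1..real M + 1}"
proof (induction M)
  case 0
  then show ?case by (simp add: has_integral_refl)
next
  case (Suc M)
  have "((\<lambda>x. of_real (frac x) * of_real x powr (- s - 1)) has_integral
          (trapezoid_error s (Suc M) + (of_nat (Suc M) powr (- s) - of_nat (Suc (Suc M)) powr (- s)) / 2) / s)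
         {real M + 1..real M + 1 + 1}"
    using frac_powr_has_integral_unit_interval[of "Suc M" s] assms by (simp add: add_ac)
  with Suc.IH have "((\<lambda>x. of_real (frac x) * of_real x powr (- s - 1)) has_integral
          ((\<Sum>k<M. trapezoid_error s (k + 1)) + (1 - of_nat (Suc M) powr (- s)) / 2) / s
          + (trapezoid_error s (Suc M) + (of_nat (Suc M) powr (- s) - of_nat (Suc (Suc M)) powr (- s)) / 2) / s)
         {1..real M + 1 + 1}"
    by (rule has_integral_combine[rotated 2]) auto
  then show ?case
    by (simp add: add_divide_distrib diff_divide_distrib algebra_simps)
qed

lemma frac_powr_has_integral:
  fixes s :: complex
  assumes "1 \<le> Re s" "s \<noteq> 1"
  shows "((\<lambda>x. of_real (frac x) * of_real x powr (- s - 1)) has_integral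
           ((\<Sum>k. trapezoid_error s (k + 1)) + 1/2) / s) {1..}"
proof -
  define f where "f = (\<lambda>x::real. of_real (frac x) * of_real x powr (- s - 1))"
  define g where "g M x = (if x \<in> {1..real M + 1} then f x else 0)" for M :: nat and x :: real
  have "s \<noteq> 0"
    using assms by auto
  have integral_g: "(g M has_integral ((\<Sum>k<M. trapezoid_error s (k + 1)) + (1 - of_nat (Suc M) powr (- s)) / 2) / s) {1..}" for M
    unfolding g_def f_def using frac_powr_has_integral_initial[OF \<open>s \<noteq> 0\<close> \<open>s \<noteq> 1\<close>, of M]
    by (subst has_integral_restrict) auto
  have dominating: "(\<lambda>x::real. x powr (-2)) integrable_on {1..}"
    using has_integral_powr_to_inf[of "-2" 1] by (auto simp: integrable_on_def)
  have dominated: "\<forall>x\<in>{1..}. norm (g M x) \<le> x powr (-2)" for M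
  proof
    fix x :: real assume "x \<in> {1..}"
    have "norm (f x) = frac x * x powr (- Re s - 1)"
      using \<open>x \<in> {1..}\<close> by (simp add: f_def norm_mult norm_powr_real_powr frac_ge_0)
    also have "\<dots> \<le> 1 * x powr (-2)"
      using \<open>x \<in> {1..}\<close> assms frac_lt_1[of x] by (intro mult_mono powr_mono) (auto simp: frac_ge_0)
    finally show "norm (g M x) \<le> x powr (-2)"
      by (simp add: g_def)
  qed
  have pointwise: "\<forall>x\<in>{1..}. (\<lambda>M. g M x) \<longlonglongrightarrow> f x"
  proof (intro ballI tendsto_eventually)
    fix x :: real assume "x \<in> {1..}"
    obtain K :: nat where "x \<le> real K"
      using real_arch_simple by blast
    then show "\<forall>\<^sub>F M in sequentially. g M x = f x"
      using \<open>x \<in> {1..}\<close> unfolding eventually_sequentially g_def by (intro exI[of _ K]) auto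
  qed
  have limit: "(\<lambda>M. ((\<Sum>k<M. trapezoid_error s (k + 1)) + (1 - of_nat (Suc M) powr (- s)) / 2) / s)
                   \<longlonglongrightarrow> ((\<Sum>k. trapezoid_error s (k + 1)) + (1 - 0) / 2) / s"
    using assms summable_trapezoid_error[of s 1]
    by (intro tendsto_intros summable_LIMSEQ tendsto_neg_powr_complex_of_nat filterlim_Suc) auto
  have "(f has_integral ((\<Sum>k. trapezoid_error s (k + 1)) + (1 - 0) / 2) / s) {1..}"
    by (rule has_integral_dominated_convergence[OF integral_g dominating dominated pointwise limit])
  then show ?thesis
    by (simp add: f_def)
qed

lemma zeta_dirichlet_series_sums:
  assumes "1 < Re s"
  shows "(\<lambda>n. 1 / of_nat (Suc n) powr s) sums (s / (s - 1) - 1/2 - (\<Sum>k. trapezoid_error s (k + 1)))"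
proof -
  have "s \<noteq> 1"
    using assms by auto
  have partial_sum: "(\<Sum>n<Suc M. 1 / of_nat (Suc n) powr s)
      = (of_nat (Suc M) powr (1 - s) - 1) / (1 - s) + (1 + of_nat (Suc M) powr (- s)) / 2
        - (\<Sum>k<M. trapezoid_error s (k + 1))" for M
  proof -
    have "(\<Sum>n<Suc M. 1 / of_nat (Suc n) powr s) = (\<Sum>n=Suc 0..Suc M. of_nat n powr (- s))"
      by (simp only: sum.atLeast1_atMost_eq powr_minus_divide)
    moreover have "(\<Sum>n=Suc 0..<Suc M. trapezoid_error s n) = (\<Sum>k<M. trapezoid_error s (k + 1))"
      by (simp only: atLeastLessThanSuc_atLeastAtMost sum.atLeast1_atMost_eq) simp
    ultimately show ?thesis
      using sum_trapezoid_error[of "Suc 0" "Suc M" s] by (simp add: algebra_simps)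
  qed
  have "(\<lambda>M. (of_nat (Suc M) powr (1 - s) - 1) / (1 - s) + (1 + of_nat (Suc M) powr (- s)) / 2
          - (\<Sum>k<M. trapezoid_error s (k + 1)))
        \<longlonglongrightarrow> (0 - 1) / (1 - s) + (1 + 0) / 2 - (\<Sum>k. trapezoid_error s (k + 1))"
    using assms \<open>s \<noteq> 1\<close> summable_trapezoid_error[of s 1]
    by (intro tendsto_intros summable_LIMSEQ tendsto_neg_powr_complex_of_nat filterlim_Suc) auto
  also have "(0 - 1) / (1 - s) + (1 + 0) / 2 - (\<Sum>k. trapezoid_error s (k + 1))
      = s / (s - 1) - 1/2 - (\<Sum>k. trapezoid_error s (k + 1))"
    using \<open>s \<noteq> 1\<close> by (simp add: field_simps)
  finally show ?thesis
    unfolding sums_def partial_sum[symmetric] by (rule LIMSEQ_imp_Suc)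
qed

lemma zeta_eq_trapezoid_series:
  assumes "1 \<le> Re s" "s \<noteq> 1"
  shows "riemann_zeta s = s / (s - 1) - 1/2 - (\<Sum>k. trapezoid_error s (k + 1))"
proof (cases "1 < Re s")
  case True
  then show ?thesis
    using zeta_dirichlet_series_sums[OF True] by (simp add: riemann_zeta_def sums_iff)
next
  case False
  have "s \<noteq> 0"
    using assms by auto
  with False show ?thesis
    using integral_unique[OF frac_powr_has_integral[OF assms]] by (simp add: riemann_zeta_def)
qed

lemma zeta_euler_maclaurin:
  assumes "1 \<le> Re s" "s \<noteq> 1" "1 \<le> N"
  shows "riemann_zeta s = (\<Sum>n=1..N. of_nat n powr (- s)) - of_nat N powr (- s) / 2
           + of_nat N powr (1 - s) / (s - 1) - (\<Sum>k. trapezoid_error s (k + N))"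
proof -
  have "(\<Sum>k. trapezoid_error s (k + 1))
      = (\<Sum>k. trapezoid_error s (k + N)) + (\<Sum>k<N - 1. trapezoid_error s (k + 1))"
    using suminf_split_initial_segment[OF summable_trapezoid_error[of s 1], of "N - 1"] assms
    by simp
  also have "(\<Sum>k<N - 1. trapezoid_error s (k + 1)) = (\<Sum>n=1..<N. trapezoid_error s n)"
  proof -
    have "{1..<N} = {Suc 0..N - 1}"
      using assms by auto
    then show ?thesis
      by (simp only: sum.atLeast1_atMost_eq) simp
  qed
  finally have split: "(\<Sum>k. trapezoid_error s (k + 1))
      = (\<Sum>k. trapezoid_error s (k + N)) + (\<Sum>n=1..<N. trapezoid_error s n)" .
  have rearrange: "s / (s - 1) - 1/2 - (T + ((A - 1) / (1 - s) - S + (1 + B) / 2))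
      = S - B / 2 + A / (s - 1) - T" for A B S T :: complex
  proof -
    have "s / (s - 1) = 1 + 1 / (s - 1)"
      using \<open>s \<noteq> 1\<close> by (simp add: field_simps)
    moreover have "(A - 1) / (1 - s) = 1 / (s - 1) - A / (s - 1)"
      by (metis minus_diff_eq minus_divide_divide diff_divide_distrib)
    ultimately show ?thesis
      by (simp add: add_divide_distrib algebra_simps)
  qed
  show ?thesis
    using zeta_eq_trapezoid_series[OF assms(1,2)] sum_trapezoid_error[of 1 N s] assms split rearrange
    by simp
qed

lemma harm_minus_half_inverse_le:
  assumes "1 \<le> n"
  shows "harm n - 1 / (2 * real n) \<le> euler_mascheroni + ln (real n)"
proof (cases "n = 1")
  case True
  then show ?thesis
    using euler_mascheroni_gt_19_over_33 by (simp add: harm_def)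
next
  case False
  then obtain m where "n = Suc (Suc m)"
    using assms by (metis One_nat_def Suc_le_D le_SucE)
  then have "m + 2 = n" "harm n = harm (Suc m) + 1 / real n"
    by (simp_all add: harm_Suc inverse_eq_divide)
  moreover have "1 / real n - 1 / (2 * real n) = 1 / (2 * real n)"
    by simp
  ultimately show ?thesis
    using euler_mascheroni_lower[of m] by simp
qed

lemma norm_zeta_partial_sum_le:
  assumes "1 \<le> Re s" "1 \<le> N"
  shows "norm ((\<Sum>n=1..N. of_nat n powr (- s)) - of_nat N powr (- s) / 2)
           \<le> euler_mascheroni + ln (real N)"
proof -
  have norm_le: "norm (of_nat n powr (- s) :: complex) \<le> 1 / real n" if "1 \<le> n" for n
  proof -
    have "norm (of_nat n powr (- s) :: complex) = real n powr (- Re s)"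
      using that by (simp add: norm_powr_real_powr)
    also have "\<dots> \<le> real n powr (- 1)"
      using that assms by (intro powr_mono) auto
    finally show ?thesis
      using that by (simp add: powr_minus_divide)
  qed
  have "(\<Sum>n=1..N. of_nat n powr (- s)) - of_nat N powr (- s) / 2
      = (\<Sum>n=1..<N. of_nat n powr (- s)) + of_nat N powr (- s) / 2"
    using assms by (simp add: atLeastLessThanSuc_atLeastAtMost[symmetric] sum.atLeastLessThan_Suc)
  also have "norm \<dots> \<le> (\<Sum>n=1..<N. 1 / real n) + 1 / real N / 2"
    using norm_le assms
    by (intro norm_triangle_le add_mono order.trans[OF norm_sum sum_mono]) (auto simp: norm_divide)
  also have "\<dots> = harm N - 1 / (2 * real N)"
    using assms by (simp add: harm_def atLeastLessThanSuc_atLeastAtMost[symmetric]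
        sum.atLeastLessThan_Suc inverse_eq_divide)
  also have "\<dots> \<le> euler_mascheroni + ln (real N)"
    using assms(2) by (rule harm_minus_half_inverse_le)
  finally show ?thesis .
qed

lemma norm_powr_div_le_inverse_Im:
  assumes "1 \<le> Re s" "Im s \<noteq> 0" "1 \<le> N"
  shows "norm (of_nat N powr (1 - s) / (s - 1)) \<le> 1 / \<bar>Im s\<bar>"
proof -
  have "norm (of_nat N powr (1 - s) :: complex) = real N powr (1 - Re s)"
    using assms by (simp add: norm_powr_real_powr)
  also have "\<dots> \<le> real N powr 0"
    using assms by (intro powr_mono) auto
  finally have "norm (of_nat N powr (1 - s) :: complex) \<le> 1"
    using assms by simp
  moreover have "\<bar>Im s\<bar> \<le> norm (s - 1)"
    using abs_Im_le_cmod[of "s - 1"] by simp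
  ultimately have "norm (of_nat N powr (1 - s) :: complex) / norm (s - 1) \<le> 1 / \<bar>Im s\<bar>"
    using assms by (intro frac_le) auto
  then show ?thesis
    by (simp add: norm_divide)
qed

lemma norm_mult_norm_add_one_le:
  fixes s :: complex
  assumes "0 \<le> Re s" "Re s \<le> 2"
  shows "norm s * norm (s + 1) \<le> (Im s)\<^sup>2 + 9"
proof -
  have "norm s * norm (s + 1) \<le> ((norm s)\<^sup>2 + (norm (s + 1))\<^sup>2) / 2"
    using sum_squares_ge_zero[of "norm s - norm (s + 1)" 0] by (simp add: power2_eq_square algebra_simps)
  also have "\<dots> = ((Re s)\<^sup>2 + (Re s + 1)\<^sup>2) / 2 + (Im s)\<^sup>2"
    by (simp add: cmod_power2)
  also have "\<dots> \<le> (2\<^sup>2 + 3\<^sup>2) / 2 + (Im s)\<^sup>2"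
    using assms by (intro add_right_mono divide_right_mono add_mono power_mono) auto
  finally show ?thesis
    by simp
qed

lemma norm_suminf_trapezoid_error_le_Im:
  assumes "1 \<le> Re s" "Re s \<le> 2" "s \<noteq> 1" "1 \<le> N"
  shows "norm (\<Sum>k. trapezoid_error s (k + N)) \<le> ((Im s)\<^sup>2 + 9) / (24 * (real N - 1/2)\<^sup>2)"
proof -
  have "norm (\<Sum>k. trapezoid_error s (k + N)) \<le> norm s * norm (s + 1) / (24 * (real N - 1/2)\<^sup>2)"
    using assms by (intro norm_suminf_trapezoid_error_le) auto
  also have "\<dots> \<le> ((Im s)\<^sup>2 + 9) / (24 * (real N - 1/2)\<^sup>2)"
    using norm_mult_norm_add_one_le[of s] assms by (intro divide_right_mono) auto
  finally show ?thesis .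
qed

lemma euler_mascheroni_less_0_5796: "(euler_mascheroni :: real) < 0.5796"
proof -
  have "ln (real (Suc 15)) = 4 * ln 2"
    by (simp add: ln_powr[symmetric])
  also have "4 * ln 2 \<ge> 4 * (0.693 :: real)"
    using ln_approx_bounds[of 2 3] by (simp add: eval_nat_numeral)
  finally have "ln (real (Suc 15)) \<ge> 4 * 0.693" .
  then show ?thesis
    using euler_mascheroni_bounds[of 15] by (simp add: harm_expand)
qed

lemma ln_7_div_2_gt: "1.2523 < ln (7/2 :: real)"
  using ln_approx_bounds[of "7/2" 6] by (simp add: eval_nat_numeral)

lemma cutoff_bounds:
  fixes t :: real
  assumes "500 \<le> t"
  defines "N \<equiv> nat \<lfloor>2 * t / 7\<rfloor>"
  shows "1 \<le> N" and "ln (real N) \<le> ln t - ln (7/2)"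
    and "(t\<^sup>2 + 9) / (24 * (real N - 1/2)\<^sup>2) \<le> 0.522"
proof -
  have "real N \<le> 2 * t / 7" "2 * t / 7 < real N + 1"
    using assms by (simp_all add: N_def) linarith+
  then have "141 < real N"
    using assms(1) by linarith
  then have "142 \<le> real N"
    by simp
  then show "1 \<le> N"
    by simp
  have "ln (real N) + ln (7/2) = ln (real N * (7/2))"
    using \<open>142 \<le> real N\<close> by (intro ln_mult_pos[symmetric]) auto
  also have "\<dots> \<le> ln t"
    using \<open>real N \<le> 2 * t / 7\<close> \<open>142 \<le> real N\<close> by simp
  finally show "ln (real N) \<le> ln t - ln (7/2)"
    by simp
  define u where "u = real N - 1/2"
  have "141 \<le> u" "t \<le> 7 * (u + 3/2) / 2"
    using \<open>142 \<le> real N\<close> \<open>2 * t / 7 < real N + 1\<close> by (simp_all add: u_def)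
  then have "t\<^sup>2 \<le> (7 * (u + 3/2) / 2)\<^sup>2"
    using assms by (intro power_mono) auto
  moreover have "141 * 2.448 \<le> u * (0.278 * u - 36.75)"
    using \<open>141 \<le> u\<close> by (intro mult_mono) auto
  ultimately have "t\<^sup>2 + 9 \<le> 0.522 * (24 * u\<^sup>2)"
    by (simp add: power2_eq_square algebra_simps)
  moreover have "0 < u"
    using \<open>141 \<le> u\<close> by simp
  ultimately show "(t\<^sup>2 + 9) / (24 * (real N - 1/2)\<^sup>2) \<le> 0.522"
    by (simp add: u_def[symmetric] pos_divide_le_eq)
qed

theorem proposition7:
  fixes \<sigma> t :: real
  assumes "1 \<le> \<sigma>" and "\<sigma> \<le> 2" and "t \<ge> 500"
  shows "norm (riemann_zeta (Complex \<sigma> t)) < ln t - 0.14"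
proof -
  define s where "s = Complex \<sigma> t"
  define N where "N = nat \<lfloor>2 * t / 7\<rfloor>"
  have s: "1 \<le> Re s" "Re s \<le> 2" "Im s = t" "s \<noteq> 1"
    using assms by (auto simp: s_def complex_eq_iff)
  have N: "1 \<le> N" "ln (real N) \<le> ln t - ln (7/2)" "(t\<^sup>2 + 9) / (24 * (real N - 1/2)\<^sup>2) \<le> 0.522"
    using cutoff_bounds[OF assms(3)] unfolding N_def by auto
  have tail: "norm (\<Sum>k. trapezoid_error s (k + N)) \<le> 0.522"
    using norm_suminf_trapezoid_error_le_Im[OF s(1,2,4) N(1)] N(3) unfolding s(3) by linarith
  have "norm (riemann_zeta s) \<le> norm ((\<Sum>n=1..N. of_nat n powr (- s)) - of_nat N powr (- s) / 2)
      + norm (of_nat N powr (1 - s) / (s - 1)) + norm (\<Sum>k. trapezoid_error s (k + N))"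
    unfolding zeta_euler_maclaurin[OF s(1,4) N(1)]
    by (rule order.trans[OF norm_triangle_ineq4]) (simp add: norm_triangle_ineq)
  also have "\<dots> \<le> (euler_mascheroni + ln (real N)) + 1 / t + 0.522"
    using norm_zeta_partial_sum_le[OF s(1) N(1)] norm_powr_div_le_inverse_Im[of s N] tail s N assms
    by (intro add_mono) auto
  also have "\<dots> < ln t - 0.14"
  proof -
    have "1 / t \<le> 1 / 500"
      using assms by (intro divide_left_mono) auto
    then show ?thesis
      using euler_mascheroni_less_0_5796 ln_7_div_2_gt N(2) by simp
  qed
  finally show ?thesis
    by (simp add: s_def)
qed

end
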